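(* Let $X=\{x_1,\dots,x_n\}$ be a set of Boolean variables and $\mathcal{C}=\{C_1,\dots,C_m\}$ a set of clauses, each consisting of exactly three positive literals. The graph $G'$ constructed from $(\mathcal{C},X)$ as described in the context is $(P_3+P_5)$-free.
   Context: First construct $(G,L)$: for each $x_i\in X$ introduce two adjacent vertices $x_i$ and $\overline{x}_i$ with $L(x_i)=L(\overline{x}_i)=\{4,5\}$. For each clause $C_j$ introduce two vertices $C_j,C_j'$ with $L(C_j)=L(C_j')=\{1,2,3\}$. Add an edge between every vertex of the form $x_i$ or $\overline{x}_i$ and every vertex of the form $C_j$ or $C_j'$. For each clause $C_j$, fix an order of its literals, say $C_j=\{x_g,x_h,x_i\}$, and add six new vertices $a_{g,j},a_{h,j},a_{i,j},a'_{g,j},a'_{h,j},a'_{i,j}$ with edges $x_ga_{g,j}$, $a_{g,j}C_j$, $x_ha_{h,j}$, $a_{h,j}C_j$, $x_ia_{i,j}$, $a_{i,j}C_j$, $\overline{x}_ga'_{g,j}$, $a'_{g,j}C_j'$, $\overline{x}_ha'_{h,j}$, $a'_{h,j}C_j'$, $\overline{x}_ia'_{i,j}$, $a'_{i,j}C_j'$, and lists $L(a_{g,j})=L(a'_{g,j})=\{1,4\}$, $L(a_{h,j})=L(a'_{h,j})=\{2,4\}$, $L(a_{i,j})=L(a'_{i,j})=\{3,4\}$. Then $G'$ is obtained from $G$ by adding a clique on five new vertices $k_1,\dots,k_5$ and adding an edge between $k_\ell$ and a vertex $u\in V(G)$ if and only if $\ell\notin L(u)$. $P_n$ denotes the path on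 $n$ vertices, $P_3+P_5$ the disjoint union of $P_3$ and $P_5$, and a graph is $H$-free if it has no induced subgraph isomorphic to $H$. *)

theory Defs
  imports Main
begin

definition induced_copy ::
  "'b set \<Rightarrow> ('b \<Rightarrow> 'b \<Rightarrow> bool) \<Rightarrow> 'a set \<Rightarrow> ('a \<Rightarrow> 'a \<Rightarrow> bool) \<Rightarrow> ('b \<Rightarrow> 'a) \<Rightarrow> bool" where
  "induced_copy VH EH VG EG f \<longleftrightarrow>
     inj_on f VH \<and> f ` VH \<subseteq> VG \<and>
     (\<forall>u\<in>VH. \<forall>v\<in>VH. EG (f u) (f v) \<longleftrightarrow> EH u v)"

definition H_free ::
  "'b set \<Rightarrow> ('b \<Rightarrow> 'b \<Rightarrow> bool) \<Rightarrow> 'a set \<Rightarrow> ('a \<Rightarrow> 'a \<Rightarrow> bool) \<Rightarrow> bool" where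
  "H_free VH EH VG EG \<longleftrightarrow> \<not> (\<exists>f. induced_copy VH EH VG EG f)"

definition P3P5_verts :: "nat set" where
  "P3P5_verts = {0..<8}"

definition P3P5_adj :: "nat \<Rightarrow> nat \<Rightarrow> bool" where
  "P3P5_adj u v \<longleftrightarrow>
     (let e = (\<lambda>a b. (u = a \<and> v = b) \<or> (u = b \<and> v = a)) in
      e 0 1 \<or> e 1 2 \<or> e 3 4 \<or> e 4 5 \<or> e 5 6 \<or> e 6 7)"

text \<open>Variables are x_0,...,x_{n-1}; clauses C_0,...,C_{m-1}; clause j is given by
the list cl j = [g,h,i] of its (distinct) variables in the fixed order.
Vertex A k j stands for a_{(cl j ! k), j} and A' k j for a'_{(cl j ! k), j}
(k \<in> {0,1,2} is the position of the literal in the fixed order of C_j);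
K l is the clique vertex k_l (l \<in> {1..5}).\<close>

datatype vert = Xv nat | Xb nat | Cv nat | Cv' nat | Av nat nat | Av' nat nat | Kv nat

definition G_verts :: "nat \<Rightarrow> nat \<Rightarrow> vert set" where
  "G_verts n m =
     {Xv i | i. i < n} \<union> {Xb i | i. i < n} \<union> {Cv j | j. j < m} \<union> {Cv' j | j. j < m} \<union>
     {Av k j | k j. k < 3 \<and> j < m} \<union> {Av' k j | k j. k < 3 \<and> j < m}"

definition Gp_verts :: "nat \<Rightarrow> nat \<Rightarrow> vert set" where
  "Gp_verts n m = G_verts n m \<union> {Kv l | l. l \<in> {1..5}}"

fun lst :: "vert \<Rightarrow> nat set" where
  "lst (Xv i) = {4,5}"
| "lst (Xb i) = {4,5}"
| "lst (Cv j) = {1,2,3}"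
| "lst (Cv' j) = {1,2,3}"
| "lst (Av k j) = {k+1, 4}"
| "lst (Av' k j) = {k+1, 4}"
| "lst (Kv l) = {}"

definition G_edge0 :: "(nat \<Rightarrow> nat list) \<Rightarrow> vert \<Rightarrow> vert \<Rightarrow> bool" where
  "G_edge0 cl u v \<longleftrightarrow>
     (\<exists>i. u = Xv i \<and> v = Xb i) \<or>
     (\<exists>i j. (u = Xv i \<or> u = Xb i) \<and> (v = Cv j \<or> v = Cv' j)) \<or>
     (\<exists>k j. u = Xv (cl j ! k) \<and> v = Av k j) \<or>
     (\<exists>k j. u = Av k j \<and> v = Cv j) \<or>
     (\<exists>k j. u = Xb (cl j ! k) \<and> v = Av' k j) \<or>
     (\<exists>k j. u = Av' k j \<and> v = Cv' j)"

definition G_adj :: "nat \<Rightarrow> nat \<Rightarrow> (nat \<Rightarrow> nat list) \<Rightarrow> vert \<Rightarrow> vert \<Rightarrow> bool" where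
  "G_adj n m cl u v \<longleftrightarrow> u \<in> G_verts n m \<and> v \<in> G_verts n m \<and>
     (G_edge0 cl u v \<or> G_edge0 cl v u)"

definition Gp_adj :: "nat \<Rightarrow> nat \<Rightarrow> (nat \<Rightarrow> nat list) \<Rightarrow> vert \<Rightarrow> vert \<Rightarrow> bool" where
  "Gp_adj n m cl u v \<longleftrightarrow>
     G_adj n m cl u v \<or>
     (\<exists>l l'. u = Kv l \<and> v = Kv l' \<and> l \<in> {1..5} \<and> l' \<in> {1..5} \<and> l \<noteq> l') \<or>
     (\<exists>l. u = Kv l \<and> l \<in> {1..5} \<and> v \<in> G_verts n m \<and> l \<notin> lst v) \<or>
     (\<exists>l. v = Kv l \<and> l \<in> {1..5} \<and> u \<in> G_verts n m \<and> l \<notin> lst u)"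

end

theory Submission
  imports Defs
begin

text \<open>Every vertex of an induced \<open>P\<^sub>3 + P\<^sub>5\<close> lies on an edge of the copy that is
anticomplete to an induced \<open>P\<^sub>3\<close> of the copy, taken in the other component. A clique
vertex \<open>k\<^sub>l\<close> with \<open>l \<noteq> 4\<close> cannot be an end of such an edge, because its non-neighbours in
\<open>G\<close> are the vertices whose list contains \<open>l\<close>, and these induce a matching. Neither can
\<open>k\<^sub>4\<close>: the other end of the edge would then be a clause vertex, and clause vertices
dominate every edge among the vertices whose list contains 4. So the copy lies in \<open>G\<close>.
There the vertices \<open>a\<close> and \<open>a'\<close> are simplicial, so the centres of induced \<open>P\<^sub>3\<close>s are
literal or clause vertices. These induce the join of a matching (the pairs
\<open>x\<^sub>i x\<^sub>i'\<close>) with an independent set (the clause vertices), in which no vertex is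
anticomplete to an induced \<open>P\<^sub>3\<close>; yet the centre of the \<open>P\<^sub>3\<close> component is anticomplete
to the three inner vertices of the \<open>P\<^sub>5\<close>.\<close>

definition induced_P3 :: "('a \<Rightarrow> 'a \<Rightarrow> bool) \<Rightarrow> 'a \<Rightarrow> 'a \<Rightarrow> 'a \<Rightarrow> bool" where
  "induced_P3 E u v w \<longleftrightarrow> E u v \<and> E v w \<and> \<not> E u w \<and> u \<noteq> w"

lemma induced_copy_restrict:
  assumes "induced_copy VH EH VG EG f" "f ` VH \<subseteq> V"
    and "\<And>u v. u \<in> V \<Longrightarrow> v \<in> V \<Longrightarrow> EG' u v \<longleftrightarrow> EG u v"
  shows "induced_copy VH EH V EG' f"
  using assms by (auto simp: induced_copy_def image_subset_iff)

lemma P3P5_copy_adj: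
  assumes "induced_copy P3P5_verts P3P5_adj V E f" "a < 8" "b < 8"
  shows "E (f a) (f b) \<longleftrightarrow> P3P5_adj a b"
  using assms by (simp add: induced_copy_def P3P5_verts_def)

lemma P3P5_copy_eq:
  assumes "induced_copy P3P5_verts P3P5_adj V E f" "a < 8" "b < 8"
  shows "f a = f b \<longleftrightarrow> a = b"
  using assms by (auto simp: induced_copy_def inj_on_def P3P5_verts_def)

lemma P3P5_copy_edge_anticomplete_to_P3:
  assumes copy: "induced_copy P3P5_verts P3P5_adj V E f" and x: "x \<in> f ` P3P5_verts"
  shows "\<exists>y u v w. E x y \<and> induced_P3 E u v w \<and>
           (\<forall>z\<in>{u, v, w}. z \<noteq> x \<and> z \<noteq> y \<and> \<not> E x z \<and> \<not> E y z)"
proof -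
  obtain i where i: "i < 8" "x = f i" using x by (auto simp: P3P5_verts_def)
  show ?thesis
  proof (cases "i < 3")
    case True
    then have "i \<in> {0, 1, 2}" by auto
    then have "E (f i) (f (if i = 1 then 0 else 1)) \<and> induced_P3 E (f 3) (f 4) (f 5) \<and>
           (\<forall>z\<in>{f 3, f 4, f 5}. z \<noteq> f i \<and> z \<noteq> f (if i = 1 then 0 else 1) \<and>
              \<not> E (f i) z \<and> \<not> E (f (if i = 1 then 0 else 1)) z)"
      by (auto simp: P3P5_copy_adj[OF copy] P3P5_copy_eq[OF copy] induced_P3_def P3P5_adj_def)
    then show ?thesis unfolding i(2) by blast
  next
    case False
    then have "i \<in> {3, 4, 5, 6, 7}" using i(1) by auto
    then have "E (f i) (f (if i = 3 then 4 else i - 1)) \<and> induced_P3 E (f 0) (f 1) (f 2) \<and>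
           (\<forall>z\<in>{f 0, f 1, f 2}. z \<noteq> f i \<and> z \<noteq> f (if i = 3 then 4 else i - 1) \<and>
              \<not> E (f i) z \<and> \<not> E (f (if i = 3 then 4 else i - 1)) z)"
      by (auto simp: P3P5_copy_adj[OF copy] P3P5_copy_eq[OF copy] induced_P3_def P3P5_adj_def)
    then show ?thesis unfolding i(2) by blast
  qed
qed

lemma P3P5_copy_anticomplete_P3_centres:
  assumes copy: "induced_copy P3P5_verts P3P5_adj V E f"
  shows "\<exists>b p q r. (\<exists>a c. induced_P3 E a b c) \<and> (\<exists>a c. induced_P3 E a p c) \<and>
           (\<exists>a c. induced_P3 E a r c) \<and> induced_P3 E p q r \<and> \<not> E b p \<and> \<not> E b q \<and> \<not> E b r"
proof -
  have "induced_P3 E (f 0) (f 1) (f 2)" "induced_P3 E (f 3) (f 4) (f 5)"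
    "induced_P3 E (f 5) (f 6) (f 7)" "induced_P3 E (f 4) (f 5) (f 6)"
    "\<not> E (f 1) (f 4)" "\<not> E (f 1) (f 5)" "\<not> E (f 1) (f 6)"
    by (simp_all add: P3P5_copy_adj[OF copy] P3P5_copy_eq[OF copy] induced_P3_def P3P5_adj_def)
  then show ?thesis by blast
qed

fun literal_vert :: "vert \<Rightarrow> bool" where
  "literal_vert (Xv i) = True"
| "literal_vert (Xb i) = True"
| "literal_vert _ = False"

fun clause_vert :: "vert \<Rightarrow> bool" where
  "clause_vert (Cv j) = True"
| "clause_vert (Cv' j) = True"
| "clause_vert _ = False"

lemma G_verts_simps [simp]:
  "Xv i \<in> G_verts n m \<longleftrightarrow> i < n" "Xb i \<in> G_verts n m \<longleftrightarrow> i < n"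
  "Cv j \<in> G_verts n m \<longleftrightarrow> j < m" "Cv' j \<in> G_verts n m \<longleftrightarrow> j < m"
  "Av k j \<in> G_verts n m \<longleftrightarrow> k < 3 \<and> j < m" "Av' k j \<in> G_verts n m \<longleftrightarrow> k < 3 \<and> j < m"
  "Kv l \<notin> G_verts n m"
  by (auto simp: G_verts_def)

lemma G_adj_sym: "G_adj n m cl u v \<longleftrightarrow> G_adj n m cl v u"
  by (auto simp: G_adj_def)

lemma G_adj_Xv: "G_adj n m cl (Xv i) u \<longleftrightarrow> i < n \<and> u \<in> G_verts n m \<and>
   (u = Xb i \<or> (\<exists>j. u = Cv j \<or> u = Cv' j) \<or> (\<exists>k j. u = Av k j \<and> cl j ! k = i))"
  by (cases u) (auto simp: G_adj_def G_edge0_def)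

lemma G_adj_Xb: "G_adj n m cl (Xb i) u \<longleftrightarrow> i < n \<and> u \<in> G_verts n m \<and>
   (u = Xv i \<or> (\<exists>j. u = Cv j \<or> u = Cv' j) \<or> (\<exists>k j. u = Av' k j \<and> cl j ! k = i))"
  by (cases u) (auto simp: G_adj_def G_edge0_def)

lemma G_adj_Cv: "G_adj n m cl (Cv j) u \<longleftrightarrow> j < m \<and> u \<in> G_verts n m \<and>
   ((\<exists>i. u = Xv i \<or> u = Xb i) \<or> (\<exists>k. u = Av k j))"
  by (cases u) (auto simp: G_adj_def G_edge0_def)

lemma G_adj_Cv': "G_adj n m cl (Cv' j) u \<longleftrightarrow> j < m \<and> u \<in> G_verts n m \<and>
   ((\<exists>i. u = Xv i \<or> u = Xb i) \<or> (\<exists>k. u = Av' k j))"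
  by (cases u) (auto simp: G_adj_def G_edge0_def)

lemma G_adj_Av: "G_adj n m cl (Av k j) u \<longleftrightarrow> k < 3 \<and> j < m \<and> u \<in> G_verts n m \<and>
   (u = Xv (cl j ! k) \<or> u = Cv j)"
  by (cases u) (auto simp: G_adj_def G_edge0_def)

lemma G_adj_Av': "G_adj n m cl (Av' k j) u \<longleftrightarrow> k < 3 \<and> j < m \<and> u \<in> G_verts n m \<and>
   (u = Xb (cl j ! k) \<or> u = Cv' j)"
  by (cases u) (auto simp: G_adj_def G_edge0_def)

lemma G_adj_Kv: "\<not> G_adj n m cl (Kv l) u"
  by (simp add: G_adj_def)

lemmas G_adj_simps = G_adj_Xv G_adj_Xb G_adj_Cv G_adj_Cv' G_adj_Av G_adj_Av' G_adj_Kv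

lemma G_adj_imp_G_verts: "G_adj n m cl u v \<Longrightarrow> u \<in> G_verts n m \<and> v \<in> G_verts n m"
  by (simp add: G_adj_def)

lemma G_P3_centre_literal_or_clause:
  assumes "induced_P3 (G_adj n m cl) u v w"
  shows "literal_vert v \<or> clause_vert v"
proof -
  have "G_adj n m cl v u" "G_adj n m cl v w" "\<not> G_adj n m cl u w" "u \<noteq> w"
    using assms G_adj_sym unfolding induced_P3_def by metis+
  then show ?thesis by (cases v) (auto simp: G_adj_simps)
qed

lemma G_adj_literal_clause:
  assumes "literal_vert u" "clause_vert v" "u \<in> G_verts n m" "v \<in> G_verts n m"
  shows "G_adj n m cl u v"
  using assms by (cases u; cases v) (auto simp: G_adj_simps)

lemma G_clause_verts_independent:
  assumes "clause_vert u" "clause_vert v"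
  shows "\<not> G_adj n m cl u v"
  using assms by (cases u; cases v) (auto simp: G_adj_simps)

lemma G_literal_verts_no_induced_P3:
  assumes "literal_vert u" "literal_vert v" "literal_vert w"
  shows "\<not> induced_P3 (G_adj n m cl) u v w"
  using assms by (cases u; cases v; cases w) (auto simp: induced_P3_def G_adj_simps)

lemma G_literal_or_clause_not_anticomplete_to_P3:
  assumes b: "literal_vert b \<or> clause_vert b" "b \<in> G_verts n m"
    and pqr: "induced_P3 (G_adj n m cl) p q r" "\<forall>z\<in>{p, q, r}. literal_vert z \<or> clause_vert z"
    and anti: "\<forall>z\<in>{p, q, r}. \<not> G_adj n m cl b z"
  shows False
proof -
  have in_G: "\<forall>z\<in>{p, q, r}. z \<in> G_verts n m"
    using pqr(1) G_adj_imp_G_verts unfolding induced_P3_def by blast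
  show False
  proof (cases "clause_vert b")
    case True
    then have "\<forall>z\<in>{p, q, r}. clause_vert z"
      using pqr(2) anti in_G b(2) G_adj_literal_clause G_adj_sym by metis
    then show False using pqr(1) G_clause_verts_independent unfolding induced_P3_def by blast
  next
    case False
    then have "\<forall>z\<in>{p, q, r}. literal_vert z"
      using b pqr(2) anti in_G G_adj_literal_clause by metis
    then show False using pqr(1) G_literal_verts_no_induced_P3 by blast
  qed
qed

lemma G_P3P5_free: "H_free P3P5_verts P3P5_adj (G_verts n m) (G_adj n m cl)"
  unfolding H_free_def
proof (intro notI, elim exE)
  fix f assume "induced_copy P3P5_verts P3P5_adj (G_verts n m) (G_adj n m cl) f"
  then obtain b p q r where centres: "\<exists>a c. induced_P3 (G_adj n m cl) a b c"
    "\<exists>a c. induced_P3 (G_adj n m cl) a p c" "\<exists>a c. induced_P3 (G_adj n m cl) a r c"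
    and pqr: "induced_P3 (G_adj n m cl) p q r"
    and anti: "\<not> G_adj n m cl b p" "\<not> G_adj n m cl b q" "\<not> G_adj n m cl b r"
    using P3P5_copy_anticomplete_P3_centres by blast
  have "b \<in> G_verts n m" using centres(1) by (auto simp: induced_P3_def G_adj_def)
  moreover have "\<forall>z\<in>{b, p, q, r}. literal_vert z \<or> clause_vert z"
    using centres pqr G_P3_centre_literal_or_clause by blast
  ultimately show False
    using G_literal_or_clause_not_anticomplete_to_P3[OF _ _ pqr] anti by blast
qed

lemma Gp_verts_cases:
  assumes "v \<in> Gp_verts n m"
  obtains "v \<in> G_verts n m" | l where "l \<in> {1..5}" "v = Kv l"
  using assms by (auto simp: Gp_verts_def)

lemma Gp_adj_G_verts:
  "u \<in> G_verts n m \<Longrightarrow> v \<in> G_verts n m \<Longrightarrow> Gp_adj n m cl u v \<longleftrightarrow> G_adj n m cl u v"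
  by (auto simp: Gp_adj_def)

lemma Gp_adj_Kv_Kv: "Gp_adj n m cl (Kv l) (Kv l') \<longleftrightarrow> l \<in> {1..5} \<and> l' \<in> {1..5} \<and> l \<noteq> l'"
  by (auto simp: Gp_adj_def G_adj_def)

lemma Gp_adj_Kv_G_verts:
  "v \<in> G_verts n m \<Longrightarrow> Gp_adj n m cl (Kv l) v \<longleftrightarrow> l \<in> {1..5} \<and> l \<notin> lst v"
  by (auto simp: Gp_adj_def G_adj_def)

lemma Gp_adj_imp_Gp_verts: "Gp_adj n m cl u v \<Longrightarrow> u \<in> Gp_verts n m \<and> v \<in> Gp_verts n m"
  by (auto simp: Gp_adj_def G_adj_def Gp_verts_def)

lemma Gp_non_nbr_of_Kv:
  assumes "l \<in> {1..5}" "v \<in> Gp_verts n m" "v \<noteq> Kv l" "\<not> Gp_adj n m cl (Kv l) v"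
  shows "v \<in> G_verts n m \<and> l \<in> lst v"
  using assms by (auto simp: Gp_verts_def Gp_adj_Kv_Kv Gp_adj_Kv_G_verts)

lemma G_colour_class_no_induced_P3:
  assumes "l \<in> {1, 2, 3, 5}" "l \<in> lst u" "l \<in> lst v" "l \<in> lst w"
  shows "\<not> induced_P3 (G_adj n m cl) u v w"
proof
  assume "induced_P3 (G_adj n m cl) u v w"
  then have "G_adj n m cl v u" "G_adj n m cl v w" "u \<noteq> w"
    using G_adj_sym unfolding induced_P3_def by metis+
  with assms show False by (cases v) (auto simp: G_adj_simps)
qed

lemma G_edge_in_colour_class_4_dominated:
  assumes "c \<in> G_verts n m" "4 \<notin> lst c" "4 \<in> lst u" "4 \<in> lst v" "G_adj n m cl u v"
  shows "G_adj n m cl c u \<or> G_adj n m cl c v"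
proof -
  have "G_adj n m cl v u" "u \<in> G_verts n m" "v \<in> G_verts n m"
    using assms(5) G_adj_sym G_adj_imp_G_verts by metis+
  with assms show ?thesis by (cases c; cases u; cases v) (auto simp: G_adj_simps)
qed

lemma Gp_Kv_not_anticomplete_to_P3:
  assumes l: "l \<in> {1, 2, 3, 5}" and uvw: "induced_P3 (Gp_adj n m cl) u v w"
    and anti: "\<forall>z\<in>{u, v, w}. z \<noteq> Kv l \<and> \<not> Gp_adj n m cl (Kv l) z"
  shows False
proof -
  have in_Gp: "\<forall>z\<in>{u, v, w}. z \<in> Gp_verts n m"
    using uvw Gp_adj_imp_Gp_verts unfolding induced_P3_def by blast
  have "l \<in> {1..5}" using l by auto
  then have in_class: "z \<in> G_verts n m \<and> l \<in> lst z" if "z \<in> {u, v, w}" for z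
    using that anti in_Gp by (intro Gp_non_nbr_of_Kv) auto
  then have "induced_P3 (G_adj n m cl) u v w"
    using uvw by (simp add: induced_P3_def Gp_adj_G_verts)
  then show False using G_colour_class_no_induced_P3[OF l] in_class by blast
qed

lemma Gp_edge_anticomplete_to_P3_in_G:
  assumes ky: "Gp_adj n m cl k y" and uvw: "induced_P3 (Gp_adj n m cl) u v w"
    and anti: "\<forall>z\<in>{u, v, w}. z \<noteq> k \<and> z \<noteq> y \<and> \<not> Gp_adj n m cl k z \<and> \<not> Gp_adj n m cl y z"
  shows "k \<in> G_verts n m"
proof (rule ccontr)
  have Kv_4: "l = 4" if "x \<in> {k, y}" "x = Kv l" "l \<in> {1..5}" for x l
  proof (rule ccontr)
    assume "l \<noteq> 4"
    with that(3) have "l \<in> {1, 2, 3, 5}" by auto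
    moreover have "\<forall>z\<in>{u, v, w}. z \<noteq> Kv l \<and> \<not> Gp_adj n m cl (Kv l) z"
      using anti that(1,2) by auto
    ultimately show False by (rule Gp_Kv_not_anticomplete_to_P3[OF _ uvw])
  qed
  assume "k \<notin> G_verts n m"
  have "k \<in> Gp_verts n m" "y \<in> Gp_verts n m" using ky Gp_adj_imp_Gp_verts by blast+
  have k: "k = Kv 4"
    using \<open>k \<in> Gp_verts n m\<close>
  proof (cases rule: Gp_verts_cases)
    case (2 l)
    then show ?thesis using Kv_4[of k l] by simp
  qed (use \<open>k \<notin> G_verts n m\<close> in blast)
  have y: "y \<in> G_verts n m"
    using \<open>y \<in> Gp_verts n m\<close>
  proof (cases rule: Gp_verts_cases)
    case (2 l)
    then have "l = 4" using Kv_4[of y l] by simp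
    with 2 ky k show ?thesis by (simp add: Gp_adj_Kv_Kv)
  qed
  have "u \<in> Gp_verts n m" "v \<in> Gp_verts n m"
    using uvw Gp_adj_imp_Gp_verts unfolding induced_P3_def by blast+
  then have u: "u \<in> G_verts n m" "4 \<in> lst u" and v: "v \<in> G_verts n m" "4 \<in> lst v"
    using anti k Gp_non_nbr_of_Kv[of 4] by auto
  have "4 \<notin> lst y"
    using ky k y Gp_adj_Kv_G_verts by simp
  moreover have "G_adj n m cl u v" "\<not> G_adj n m cl y u" "\<not> G_adj n m cl y v"
    using uvw anti u(1) v(1) y Gp_adj_G_verts unfolding induced_P3_def by auto
  ultimately show False
    using G_edge_in_colour_class_4_dominated[OF y _ u(2) v(2)] by blast
qed

theorem lemma3:
  fixes n m :: nat and cl :: "nat \<Rightarrow> nat list"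
  assumes clause_size: "\<forall>j<m. length (cl j) = 3 \<and> distinct (cl j)"
      and clause_vars: "\<forall>j<m. set (cl j) \<subseteq> {..<n}"
      and clauses_distinct: "\<forall>j<m. \<forall>j'<m. set (cl j) = set (cl j') \<longrightarrow> j = j'"
  shows "H_free P3P5_verts P3P5_adj (Gp_verts n m) (Gp_adj n m cl)"
  unfolding H_free_def
proof (intro notI, elim exE)
  fix f assume copy: "induced_copy P3P5_verts P3P5_adj (Gp_verts n m) (Gp_adj n m cl) f"
  have "f ` P3P5_verts \<subseteq> G_verts n m"
  proof
    fix x assume "x \<in> f ` P3P5_verts"
    then obtain y u v w where "Gp_adj n m cl x y" "induced_P3 (Gp_adj n m cl) u v w"
      "\<forall>z\<in>{u, v, w}. z \<noteq> x \<and> z \<noteq> y \<and> \<not> Gp_adj n m cl x z \<and> \<not> Gp_adj n m cl y z"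
      using P3P5_copy_edge_anticomplete_to_P3[OF copy] by blast
    then show "x \<in> G_verts n m" by (rule Gp_edge_anticomplete_to_P3_in_G)
  qed
  with copy have "induced_copy P3P5_verts P3P5_adj (G_verts n m) (G_adj n m cl) f"
    by (rule induced_copy_restrict) (simp add: Gp_adj_G_verts)
  with G_P3P5_free show False unfolding H_free_def by blast
qed

end
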